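(* Let $m$ be an odd positive integer, let $r,s\in\mathbb{Z}$ with $2^{-1}+r^2+s^2\equiv0\pmod m$, and let $\tau:H_{1,2,2}/mH_{1,2,2}\to M_2(\mathbb{Z}/m\mathbb{Z})$ be the map defined as follows: writing $\mathbf{q}\equiv q_1+q_2\mathbf{i}+q_3\sqrt2\,\mathbf{j}+q_4\sqrt2\,\mathbf{k}\pmod{mH_{1,2,2}}$ with $q_i\in\mathbb{Z}$, $\tau(\mathbf{q})=\begin{pmatrix}q_1-2rq_3-2sq_4 & q_2-2sq_3+2rq_4\\ -q_2-2sq_3+2rq_4 & q_1+2rq_3+2sq_4\end{pmatrix}$ modulo $m$. Then $\mathbf{q}\in H_{1,2,2}$ is primitive to $m$ if and only if the matrix $\tau(\mathbf{q})$ is primitive to $m$.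
   Context: Let $\mathbf{i},\mathbf{j},\mathbf{k}$ be the standard quaternion units. $H_{1,2,2}$ is the subring of the quaternions equal to the $\mathbb{Z}$-module generated by $\mathbf{v}_1=1$, $\mathbf{v}_2=\mathbf{i}$, $\mathbf{v}_3=\tfrac12(1+\mathbf{i}+\sqrt2\,\mathbf{j})$, $\mathbf{v}_4=\tfrac12(1+\mathbf{i}+\sqrt2\,\mathbf{k})$. An element $\mathbf{g}=g_1\mathbf{v}_1+g_2\mathbf{v}_2+g_3\mathbf{v}_3+g_4\mathbf{v}_4$ ($g_i\in\mathbb{Z}$) is primitive to $m$ if $\gcd(g_1,g_2,g_3,g_4,m)=1$; this depends only on the class of $\mathbf{g}$ modulo $mH_{1,2,2}$. A matrix $\begin{pmatrix}\alpha&\beta\\\gamma&\delta\end{pmatrix}$ over $\mathbb{Z}/m\mathbb{Z}$ is primitive to $m$ if $\gcd(\alpha,\beta,\gamma,\delta,m)=1$. $2^{-1}$ denotes the inverse of $2$ modulo $m$. *)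

theory Defs
  imports "HOL-Analysis.Analysis" "HOL-Number_Theory.Number_Theory"
begin

text \<open>Quaternions are represented by their real coordinates w.r.t. 1, i, j, k.\<close>
type_synonym quat = "real \<times> real \<times> real \<times> real"

definition v1 :: quat where "v1 = (1, 0, 0, 0)"
definition v2 :: quat where "v2 = (0, 1, 0, 0)"
definition v3 :: quat where "v3 = (1/2, 1/2, sqrt 2 / 2, 0)"
definition v4 :: quat where "v4 = (1/2, 1/2, 0, sqrt 2 / 2)"

definition H122 :: "int \<Rightarrow> int \<Rightarrow> int \<Rightarrow> int \<Rightarrow> quat" where
  "H122 g1 g2 g3 g4 = of_int g1 *\<^sub>R v1 + of_int g2 *\<^sub>R v2 + of_int g3 *\<^sub>R v3 + of_int g4 *\<^sub>R v4"

definition std_quat :: "int \<Rightarrow> int \<Rightarrow> int \<Rightarrow> int \<Rightarrow> quat" where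
  "std_quat q1 q2 q3 q4 = (of_int q1, of_int q2, sqrt 2 * of_int q3, sqrt 2 * of_int q4)"

definition cong_mH :: "int \<Rightarrow> quat \<Rightarrow> quat \<Rightarrow> bool" where
  "cong_mH m x y \<longleftrightarrow> (\<exists>h1 h2 h3 h4. x - y = of_int m *\<^sub>R H122 h1 h2 h3 h4)"

definition prim_H :: "int \<Rightarrow> int \<Rightarrow> int \<Rightarrow> int \<Rightarrow> int \<Rightarrow> bool" where
  "prim_H m g1 g2 g3 g4 \<longleftrightarrow> gcd (gcd (gcd g1 g2) (gcd g3 g4)) m = 1"

text \<open>2x2 matrices over Z/mZ as tuples (alpha, beta, gamma, delta) of residues.\<close>
definition prim_mat :: "int \<Rightarrow> int \<times> int \<times> int \<times> int \<Rightarrow> bool" where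
  "prim_mat m A = (case A of (a, b, c, d) \<Rightarrow>
      gcd (gcd (gcd a b) (gcd c d)) m = 1)"

definition inv2 :: "int \<Rightarrow> int" where "inv2 m = (m + 1) div 2"

definition tau :: "int \<Rightarrow> int \<Rightarrow> int \<Rightarrow> int \<Rightarrow> int \<Rightarrow> int \<Rightarrow> int \<Rightarrow> int \<times> int \<times> int \<times> int" where
  "tau m r s q1 q2 q3 q4 =
     ((q1 - 2 * r * q3 - 2 * s * q4) mod m, (q2 - 2 * s * q3 + 2 * r * q4) mod m,
      (- q2 - 2 * s * q3 + 2 * r * q4) mod m, (q1 + 2 * r * q3 + 2 * s * q4) mod m)"

end

theory Submission
  imports Defs
begin

text \<open>Both primitivity conditions say that no divisor e > 1 of m divides all four coordinates,
  so it suffices to show that, for every divisor e of m, e divides g1, ..., g4 iff it divides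
  q1, ..., q4 iff it divides the entries of tau(q). The three coordinate systems are related by
  linear substitutions that are invertible modulo m: inverting them only needs division by 2,
  which is harmless since e is odd, and division by 2(r^2 + s^2) = -1 modulo m.\<close>

lemma gcd_quad_eqI:
  fixes m x1 x2 x3 x4 y1 y2 y3 y4 :: "'a::semiring_gcd"
  assumes "\<And>e. e dvd m \<Longrightarrow>
    (e dvd x1 \<and> e dvd x2 \<and> e dvd x3 \<and> e dvd x4 \<longleftrightarrow> e dvd y1 \<and> e dvd y2 \<and> e dvd y3 \<and> e dvd y4)"
  shows "gcd (gcd (gcd x1 x2) (gcd x3 x4)) m = gcd (gcd (gcd y1 y2) (gcd y3 y4)) m"
proof (rule associated_eqI)
  let ?gx = "gcd (gcd (gcd x1 x2) (gcd x3 x4)) m" and ?gy = "gcd (gcd (gcd y1 y2) (gcd y3 y4)) m"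
  have "?gx dvd m" "?gy dvd m" by simp_all
  moreover have "?gx dvd x1 \<and> ?gx dvd x2 \<and> ?gx dvd x3 \<and> ?gx dvd x4"
    "?gy dvd y1 \<and> ?gy dvd y2 \<and> ?gy dvd y3 \<and> ?gy dvd y4"
    by (meson dvd_trans gcd_dvd1 gcd_dvd2)+
  ultimately show "?gx dvd ?gy" "?gy dvd ?gx"
    using assms by simp_all
qed simp_all

lemma odd_divisor_dvd_double_iff:
  fixes m e x :: int
  assumes "odd m" and "e dvd m"
  shows "e dvd 2 * x \<longleftrightarrow> e dvd x"
proof -
  have "coprime e 2"
    using assms by (metis coprime_right_2_iff_odd dvd_trans)
  then show ?thesis
    by (simp add: coprime_dvd_mult_right_iff)
qed

lemma cong_inv2_add_0_iff:
  fixes m x :: int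
  assumes "odd m"
  shows "[inv2 m + x = 0] (mod m) \<longleftrightarrow> m dvd 2 * x + 1"
proof -
  have "even (m + 1)"
    using assms by simp
  then have "2 * inv2 m = m + 1"
    unfolding inv2_def by (rule dvd_mult_div_cancel)
  then have "2 * (inv2 m + x) = m + (2 * x + 1)"
    by simp
  then have "m dvd 2 * (inv2 m + x) \<longleftrightarrow> m dvd 2 * x + 1"
    by (metis dvd_add_right_iff dvd_refl)
  then show ?thesis
    unfolding cong_0_iff using odd_divisor_dvd_double_iff[OF assms dvd_refl] by blast
qed

lemma cong_mH_H122_std_quatE:
  assumes "cong_mH m (H122 g1 g2 g3 g4) (std_quat q1 q2 q3 q4)"
  obtains h1 h2 h3 h4 where
    "g1 = q1 - q3 - q4 + m * h1" "g2 = q2 - q3 - q4 + m * h2"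
    "g3 = 2 * q3 + m * h3" "g4 = 2 * q4 + m * h4"
proof -
  obtain h1 h2 h3 h4
    where h: "H122 g1 g2 g3 g4 - std_quat q1 q2 q3 q4 = of_int m *\<^sub>R H122 h1 h2 h3 h4"
    using assms unfolding cong_mH_def by blast
  have "real_of_int (2 * g1 + g3 + g4 - 2 * q1) = of_int (m * (2 * h1 + h3 + h4))"
    "real_of_int (2 * g2 + g3 + g4 - 2 * q2) = of_int (m * (2 * h2 + h3 + h4))"
    "sqrt 2 * real_of_int (g3 - 2 * q3) = sqrt 2 * of_int (m * h3)"
    "sqrt 2 * real_of_int (g4 - 2 * q4) = sqrt 2 * of_int (m * h4)"
    using h by (simp_all add: H122_def std_quat_def v1_def v2_def v3_def v4_def field_simps)
  then have "2 * g1 + g3 + g4 - 2 * q1 = m * (2 * h1 + h3 + h4)"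
    "2 * g2 + g3 + g4 - 2 * q2 = m * (2 * h2 + h3 + h4)"
    "g3 = 2 * q3 + m * h3" "g4 = 2 * q4 + m * h4"
    by (simp_all only: of_int_eq_iff mult_left_cancel real_sqrt_eq_zero_cancel_iff)
  then have "g1 = q1 - q3 - q4 + m * h1" "g2 = q2 - q3 - q4 + m * h2"
    "g3 = 2 * q3 + m * h3" "g4 = 2 * q4 + m * h4"
    by (simp_all add: distrib_left)
  then show thesis
    by (rule that)
qed

lemma common_divisors_H122_std_quat:
  fixes m e :: int
  assumes "odd m" and "e dvd m"
    and "cong_mH m (H122 g1 g2 g3 g4) (std_quat q1 q2 q3 q4)"
  shows "e dvd g1 \<and> e dvd g2 \<and> e dvd g3 \<and> e dvd g4 \<longleftrightarrow>
    e dvd q1 \<and> e dvd q2 \<and> e dvd q3 \<and> e dvd q4"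
proof -
  obtain h1 h2 h3 h4 where g:
    "g1 = q1 - q3 - q4 + m * h1" "g2 = q2 - q3 - q4 + m * h2"
    "g3 = 2 * q3 + m * h3" "g4 = 2 * q4 + m * h4"
    using assms(3) by (rule cong_mH_H122_std_quatE)
  have em: "e dvd m * h" for h
    using assms(2) by simp
  note double = odd_divisor_dvd_double_iff[OF assms(1,2)]
  have "e dvd g3 \<longleftrightarrow> e dvd q3" "e dvd g4 \<longleftrightarrow> e dvd q4"
    unfolding g by (simp_all add: dvd_add_left_iff em double)
  moreover have "e dvd q3 \<Longrightarrow> e dvd q4 \<Longrightarrow>
      (e dvd g1 \<longleftrightarrow> e dvd q1) \<and> (e dvd g2 \<longleftrightarrow> e dvd q2)"
    unfolding g by (simp add: dvd_add_left_iff dvd_diff_left_iff em)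
  ultimately show ?thesis
    by blast
qed

lemma common_divisors_tau_entries:
  fixes m e r s q1 q2 q3 q4 :: int
  assumes "odd m" and "e dvd m" and "m dvd 2 * (r^2 + s^2) + 1"
  defines "a \<equiv> q1 - 2 * r * q3 - 2 * s * q4" and "b \<equiv> q2 - 2 * s * q3 + 2 * r * q4"
    and "c \<equiv> - q2 - 2 * s * q3 + 2 * r * q4" and "d \<equiv> q1 + 2 * r * q3 + 2 * s * q4"
  shows "e dvd q1 \<and> e dvd q2 \<and> e dvd q3 \<and> e dvd q4 \<longleftrightarrow>
    e dvd a \<and> e dvd b \<and> e dvd c \<and> e dvd d"
proof
  assume "e dvd q1 \<and> e dvd q2 \<and> e dvd q3 \<and> e dvd q4"
  then show "e dvd a \<and> e dvd b \<and> e dvd c \<and> e dvd d"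
    by (simp add: a_def b_def c_def d_def)
next
  assume abcd: "e dvd a \<and> e dvd b \<and> e dvd c \<and> e dvd d"
  define u where "u = 2 * (r^2 + s^2) + 1"
  have "e dvd u"
    using assms(2,3) u_def by (metis dvd_trans)
  \<comment> \<open>since r (d - a) - s (b + c) = 4 (r^2 + s^2) q3 = 2 u q3 - 2 q3, and similarly for q4\<close>
  have "2 * q1 = a + d" "2 * q2 = b - c"
    "2 * q3 = 2 * u * q3 - (r * (d - a) - s * (b + c))"
    "2 * q4 = 2 * u * q4 - (s * (d - a) + r * (b + c))"
    by (simp_all add: a_def b_def c_def d_def u_def algebra_simps power2_eq_square)
  then have "e dvd 2 * q1" "e dvd 2 * q2" "e dvd 2 * q3" "e dvd 2 * q4"
    using abcd \<open>e dvd u\<close> by simp_all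
  then show "e dvd q1 \<and> e dvd q2 \<and> e dvd q3 \<and> e dvd q4"
    using odd_divisor_dvd_double_iff[OF assms(1,2)] by simp
qed

lemma common_divisors_tau:
  fixes m e r s q1 q2 q3 q4 a b c d :: int
  assumes "odd m" and "e dvd m" and "m dvd 2 * (r^2 + s^2) + 1"
    and "tau m r s q1 q2 q3 q4 = (a, b, c, d)"
  shows "e dvd q1 \<and> e dvd q2 \<and> e dvd q3 \<and> e dvd q4 \<longleftrightarrow>
    e dvd a \<and> e dvd b \<and> e dvd c \<and> e dvd d"
proof -
  have "e dvd x mod m \<longleftrightarrow> e dvd x" for x
    using assms(2) by (rule dvd_mod_iff)
  with assms(4) show ?thesis
    unfolding common_divisors_tau_entries[OF assms(1-3), of q1 q2 q3 q4] tau_def by auto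
qed

theorem theorem30:
  fixes m r s g1 g2 g3 g4 q1 q2 q3 q4 :: int
  assumes "m > 0" and "odd m"
    and "[inv2 m + r^2 + s^2 = 0] (mod m)"
    and "cong_mH m (H122 g1 g2 g3 g4) (std_quat q1 q2 q3 q4)"
  shows "prim_H m g1 g2 g3 g4 \<longleftrightarrow> prim_mat m (tau m r s q1 q2 q3 q4)"
proof -
  obtain a b c d where tau: "tau m r s q1 q2 q3 q4 = (a, b, c, d)"
    by (metis prod.exhaust)
  have rs: "m dvd 2 * (r^2 + s^2) + 1"
    using assms(2,3) cong_inv2_add_0_iff[of m "r^2 + s^2"] by (simp add: add.assoc)
  have "gcd (gcd (gcd g1 g2) (gcd g3 g4)) m = gcd (gcd (gcd q1 q2) (gcd q3 q4)) m"
    using common_divisors_H122_std_quat[OF assms(2) _ assms(4)] by (rule gcd_quad_eqI)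
  also have "\<dots> = gcd (gcd (gcd a b) (gcd c d)) m"
    using common_divisors_tau[OF assms(2) _ rs tau] by (rule gcd_quad_eqI)
  finally show ?thesis
    by (simp add: prim_H_def prim_mat_def tau)
qed

end
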